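(* Let $G$ be an instance, $b>1$ and $R\ge 0$. If $H$ is a minimal motivating subgraph of $G$ for reward $R$, then the edge set of $H$ forms a single directed path from $s$ to $t$.
   Context: An instance is a finite directed acyclic graph $G=(V,E)$ with nonnegative edge costs $c(u,v)$, start node $s$ and target node $t$, where $t$ has no outgoing edges. For a subgraph $H$ of $G$ (obtained by deleting edges), the sophisticated agent with bias $b$ and reward $R$ at $t$ behaves in $H$ as follows: process nodes in reverse topological order; $t$ is never abandoned and $C_R(t)=0$; for $u\ne t$, among out-edges $(u,v)$ of $H$ with $v$ not abandoned let $P(u,v)=b\,c(u,v)+C_R(v)$; if none exists or all have $P(u,v)>R$, $u$ is abandoned; otherwise the agent at $u$ moves to $v^*(u)\in\arg\min P(u,v)$ and $C_R(u)=c(u,v^*(u))+C_R(v^*(u))$. The agent is motivated to traverse $H$ if $s$ is not abandoned in $H$. A minimal motivating subgraph for reward $R$ is a subgraph $H$ of $G$ that the agent is motivated to traverse for reward $R$, while it is not motivated to traverse any proper subgraph of $H$ for reward $R$. *)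

theory Defs
  imports Complex_Main
begin

definition is_instance :: "'v set \<Rightarrow> ('v \<times> 'v) set \<Rightarrow> ('v \<Rightarrow> 'v \<Rightarrow> real) \<Rightarrow> 'v \<Rightarrow> 'v \<Rightarrow> bool" where
  "is_instance V E c s t \<longleftrightarrow> finite V \<and> E \<subseteq> V \<times> V \<and> acyclic E
     \<and> (\<forall>u v. (u, v) \<in> E \<longrightarrow> 0 \<le> c u v) \<and> s \<in> V \<and> t \<in> V
     \<and> (\<forall>v. (t, v) \<notin> E)"

text \<open>Tie-breaking rule: given the subgraph H, the current node u and the (nonempty) set of
  minimisers of P(u,.), it selects one of them.\<close>
definition valid_tiebreak :: "(('v \<times> 'v) set \<Rightarrow> 'v \<Rightarrow> 'v set \<Rightarrow> 'v) \<Rightarrow> bool" where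
  "valid_tiebreak sel \<longleftrightarrow> (\<forall>H u A. A \<noteq> {} \<longrightarrow> sel H u A \<in> A)"

text \<open>The value at node u is
  None if u is abandoned, and Some (C_R u) otherwise.\<close>
definition agent_val ::
  "(('v \<times> 'v) set \<Rightarrow> 'v \<Rightarrow> 'v set \<Rightarrow> 'v) \<Rightarrow> ('v \<Rightarrow> 'v \<Rightarrow> real) \<Rightarrow> 'v \<Rightarrow> real \<Rightarrow> real
    \<Rightarrow> ('v \<times> 'v) set \<Rightarrow> 'v \<Rightarrow> real option" where
  "agent_val sel c t b R H = wfrec {(v, u). (u, v) \<in> H}
     (\<lambda>f u. if u = t then Some 0 else
        (let cand = {v. (u, v) \<in> H \<and> f v \<noteq> None};
             P = (\<lambda>v. b * c u v + the (f v))
         in if cand = {} \<or> (\<forall>v\<in>cand. P v > R) then None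
            else (let A = {v \<in> cand. P v = Min (P ` cand)};
                      w = sel H u A
                  in Some (c u w + the (f w)))))"

definition motivated ::
  "(('v \<times> 'v) set \<Rightarrow> 'v \<Rightarrow> 'v set \<Rightarrow> 'v) \<Rightarrow> ('v \<Rightarrow> 'v \<Rightarrow> real) \<Rightarrow> 'v \<Rightarrow> 'v \<Rightarrow> real \<Rightarrow> real
    \<Rightarrow> ('v \<times> 'v) set \<Rightarrow> bool" where
  "motivated sel c s t b R H \<longleftrightarrow> agent_val sel c t b R H s \<noteq> None"

definition minimal_motivating ::
  "(('v \<times> 'v) set \<Rightarrow> 'v \<Rightarrow> 'v set \<Rightarrow> 'v) \<Rightarrow> ('v \<times> 'v) set \<Rightarrow> ('v \<Rightarrow> 'v \<Rightarrow> real) \<Rightarrow> 'v \<Rightarrow> 'v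
    \<Rightarrow> real \<Rightarrow> real \<Rightarrow> ('v \<times> 'v) set \<Rightarrow> bool" where
  "minimal_motivating sel E c s t b R H \<longleftrightarrow> H \<subseteq> E \<and> motivated sel c s t b R H
     \<and> (\<forall>H'. H' \<subset> H \<longrightarrow> \<not> motivated sel c s t b R H')"

end

theory Submission
  imports Defs
begin

text \<open>Follow the agent from \<open>s\<close>: at every node other than \<open>t\<close> it takes an edge of \<open>H\<close> whose
  perceived cost \<open>b c(u,v) + C_R(v)\<close> is at most \<open>R\<close>, so it reaches \<open>t\<close> along a simple path \<open>p\<close> of
  \<open>H\<close>.  In the subgraph formed by the edges of \<open>p\<close> alone, every node of \<open>p\<close> has exactly one
  successor, which by backward induction along \<open>p\<close> is not abandoned and has the same value as
  in \<open>H\<close>; hence the agent is still motivated there, and minimality forces \<open>H\<close> to be that path.\<close>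

lemma walk_reaches_all:
  assumes "\<forall>(x, y) \<in> set (zip p (tl p)). (x, y) \<in> r" and "v \<in> set p"
  shows "(hd p, v) \<in> r\<^sup>*"
  using assms
proof (induction p)
  case (Cons a p)
  then show ?case
    by (cases p) (auto intro: converse_rtrancl_into_rtrancl)
qed simp

lemma distinct_walk_unique_successor:
  "distinct p \<Longrightarrow> (x, y) \<in> set (zip p (tl p)) \<Longrightarrow> (x, z) \<in> set (zip p (tl p)) \<Longrightarrow> y = z"
proof (induction p)
  case (Cons a p)
  then show ?case
    by (cases p) (auto dest: set_zip_leftD)
qed simp

lemma walk_successor_exists:
  "x \<in> set p \<Longrightarrow> x \<noteq> last p \<Longrightarrow> \<exists>y. (x, y) \<in> set (zip p (tl p))"
proof (induction p)
  case (Cons a p)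
  then show ?case
    by (cases p) auto
qed simp

lemma walk_successor_in_set: "(x, y) \<in> set (zip p (tl p)) \<Longrightarrow> y \<in> set p"
  by (cases p) (auto dest: set_zip_rightD)

definition agent_rule ::
  "(('v \<times> 'v) set \<Rightarrow> 'v \<Rightarrow> 'v set \<Rightarrow> 'v) \<Rightarrow> ('v \<Rightarrow> 'v \<Rightarrow> real) \<Rightarrow> 'v \<Rightarrow> real \<Rightarrow> real
    \<Rightarrow> ('v \<times> 'v) set \<Rightarrow> ('v \<Rightarrow> real option) \<Rightarrow> 'v \<Rightarrow> real option" where
  "agent_rule sel c t b R H = (\<lambda>f u. if u = t then Some 0 else
        (let cand = {v. (u, v) \<in> H \<and> f v \<noteq> None};
             P = (\<lambda>v. b * c u v + the (f v))
         in if cand = {} \<or> (\<forall>v\<in>cand. P v > R) then None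
            else (let A = {v \<in> cand. P v = Min (P ` cand)};
                      w = sel H u A
                  in Some (c u w + the (f w)))))"

definition agent_move ::
  "(('v \<times> 'v) set \<Rightarrow> 'v \<Rightarrow> 'v set \<Rightarrow> 'v) \<Rightarrow> ('v \<Rightarrow> 'v \<Rightarrow> real) \<Rightarrow> 'v \<Rightarrow> real \<Rightarrow> real
    \<Rightarrow> ('v \<times> 'v) set \<Rightarrow> 'v \<Rightarrow> 'v \<Rightarrow> bool" where
  "agent_move sel c t b R H u w \<longleftrightarrow> (u, w) \<in> H \<and> agent_val sel c t b R H w \<noteq> None
     \<and> agent_val sel c t b R H u = Some (c u w + the (agent_val sel c t b R H w))
     \<and> b * c u w + the (agent_val sel c t b R H w) \<le> R"

context
  fixes sel :: "('v \<times> 'v) set \<Rightarrow> 'v \<Rightarrow> 'v set \<Rightarrow> 'v"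
    and c :: "'v \<Rightarrow> 'v \<Rightarrow> real" and t :: 'v and b R :: real
  assumes tiebreak: "valid_tiebreak sel"
begin

lemma agent_rule_cong:
  assumes "finite H" and fg: "\<And>v. (u, v) \<in> H \<Longrightarrow> f v = g v"
  shows "agent_rule sel c t b R H f u = agent_rule sel c t b R H g u"
proof -
  define C where "C = {v. (u, v) \<in> H \<and> f v \<noteq> None}"
  define P where "P = (\<lambda>v. b * c u v + the (f v))"
  have P_f: "b * c u v + the (f v) = P v" for v by (simp add: P_def)
  define A where "A = {v \<in> C. P v = Min (P ` C)}"
  have C_g: "{v. (u, v) \<in> H \<and> g v \<noteq> None} = C" using fg by (auto simp: C_def)
  have on_C: "f v = g v" if "v \<in> C" for v using fg that by (simp add: C_def)
  have P_g: "(\<lambda>v. b * c u v + the (g v)) ` C = P ` C" "\<forall>v\<in>C. b * c u v + the (g v) = P v"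
    by (auto simp: P_def on_C)
  have A_g: "{v \<in> C. b * c u v + the (g v) = Min (P ` C)} = A" using P_g(2) by (auto simp: A_def)
  have "C \<subseteq> snd ` H" by (force simp: C_def)
  then have "finite C" using \<open>finite H\<close> by (simp add: finite_subset)
  then have "sel H u A \<in> C" if "C \<noteq> {}"
  proof -
    have "Min (P ` C) \<in> P ` C" using \<open>finite C\<close> that by simp
    then have "A \<noteq> {}" by (auto simp: A_def)
    then have "sel H u A \<in> A" using tiebreak by (simp add: valid_tiebreak_def)
    then show ?thesis by (simp add: A_def)
  qed
  moreover have "(\<forall>v\<in>C. R < b * c u v + the (g v)) \<longleftrightarrow> (\<forall>v\<in>C. R < P v)"
    using P_g(2) by simp
  ultimately show ?thesis
    unfolding agent_rule_def Let_def C_def[symmetric] P_f A_def[symmetric] C_g P_g(1) A_g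
    by (cases "C = {}") (simp_all add: on_C)
qed

lemma agent_val_fixpoint:
  assumes "finite H" and "acyclic H"
  shows "agent_val sel c t b R H = agent_rule sel c t b R H (agent_val sel c t b R H)"
proof -
  have wf: "wf {(v, u). (u, v) \<in> H}"
    using finite_acyclic_wf_converse[OF assms] by (simp add: converse_unfold)
  have adm: "adm_wf {(v, u). (u, v) \<in> H} (agent_rule sel c t b R H)"
    unfolding adm_wf_def using agent_rule_cong[OF \<open>finite H\<close>] by blast
  have "agent_val sel c t b R H = wfrec {(v, u). (u, v) \<in> H} (agent_rule sel c t b R H)"
    unfolding agent_val_def agent_rule_def ..
  then show ?thesis
    using wfrec_fixpoint[OF wf adm] by simp
qed

lemma agent_val_target:
  assumes "finite H" and "acyclic H"
  shows "agent_val sel c t b R H t = Some 0"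
  by (subst agent_val_fixpoint[OF assms]) (simp add: agent_rule_def)

lemma agent_move_exists:
  assumes "finite H" and "acyclic H"
    and "agent_val sel c t b R H u \<noteq> None" and "u \<noteq> t"
  obtains w where "agent_move sel c t b R H u w"
proof -
  define f where "f = agent_val sel c t b R H"
  define C where "C = {v. (u, v) \<in> H \<and> f v \<noteq> None}"
  define P where "P = (\<lambda>v. b * c u v + the (f v))"
  have P_f: "b * c u v + the (f v) = P v" for v by (simp add: P_def)
  define A where "A = {v \<in> C. P v = Min (P ` C)}"
  have f_u: "f u = (if C = {} \<or> (\<forall>v\<in>C. P v > R) then None
                    else Some (c u (sel H u A) + the (f (sel H u A))))"
    using fun_cong[OF agent_val_fixpoint[OF assms(1,2)], of u] \<open>u \<noteq> t\<close>
    unfolding f_def[symmetric] agent_rule_def Let_def C_def[symmetric] P_f A_def[symmetric]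
    by simp
  then obtain v where v: "v \<in> C" "P v \<le> R"
    using \<open>agent_val sel c t b R H u \<noteq> None\<close> unfolding f_def[symmetric]
    by (metis (full_types) not_less)
  have "C \<subseteq> snd ` H" by (force simp: C_def)
  then have "finite C" using \<open>finite H\<close> by (simp add: finite_subset)
  then have "Min (P ` C) \<in> P ` C" and "Min (P ` C) \<le> P v"
    using v by (auto intro: Min_in)
  then have "A \<noteq> {}" by (auto simp: A_def)
  then have sel_A: "sel H u A \<in> A" using tiebreak by (simp add: valid_tiebreak_def)
  then have "P (sel H u A) \<le> R" using \<open>Min (P ` C) \<le> P v\<close> v(2) by (simp add: A_def)
  with sel_A have "agent_move sel c t b R H u (sel H u A)"
    using f_u v unfolding agent_move_def f_def[symmetric] by (auto simp: A_def C_def P_def)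
  then show thesis ..
qed

lemma agent_val_unique_candidate:
  assumes "finite H" and "acyclic H" and "u \<noteq> t"
    and "{v. (u, v) \<in> H \<and> agent_val sel c t b R H v \<noteq> None} = {y}"
  shows "agent_val sel c t b R H u =
    (if b * c u y + the (agent_val sel c t b R H y) \<le> R
     then Some (c u y + the (agent_val sel c t b R H y)) else None)"
proof -
  have "sel H u {y} = y" using tiebreak unfolding valid_tiebreak_def by blast
  moreover have argmin_y: "{v \<in> {y}. Q v = Min (Q ` {y})} = {y}" for Q :: "'v \<Rightarrow> real" by auto
  moreover have "agent_val sel c t b R H u = agent_rule sel c t b R H (agent_val sel c t b R H) u"
    using agent_val_fixpoint[OF assms(1,2)] by simp
  ultimately show ?thesis
    using \<open>u \<noteq> t\<close> unfolding agent_rule_def Let_def assms(4) argmin_y by (simp add: not_less)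
qed

lemma agent_walk_to_target:
  assumes "finite H" and "acyclic H" and "agent_val sel c t b R H u \<noteq> None"
  obtains p where "p \<noteq> []" "hd p = u" "last p = t" "distinct p"
    "\<forall>(x, y) \<in> set (zip p (tl p)). agent_move sel c t b R H x y"
proof -
  have "wf {(v, u). (u, v) \<in> H}"
    using finite_acyclic_wf_converse[OF assms(1,2)] by (simp add: converse_unfold)
  then have "\<exists>p. p \<noteq> [] \<and> hd p = u \<and> last p = t \<and> distinct p
      \<and> (\<forall>(x, y) \<in> set (zip p (tl p)). agent_move sel c t b R H x y)"
    using assms(3)
  proof (induction u rule: wf_induct_rule)
    case (less u)
    show ?case
    proof (cases "u = t")
      case True
      then show ?thesis by (intro exI[of _ "[t]"]) simp
    next
      case False
      then obtain w where move: "agent_move sel c t b R H u w"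
        using agent_move_exists[OF assms(1,2) less.prems] by blast
      then have "(u, w) \<in> H" "agent_val sel c t b R H w \<noteq> None"
        by (simp_all add: agent_move_def)
      then obtain q where q: "q \<noteq> []" "hd q = w" "last q = t" "distinct q"
        and q_moves: "\<forall>(x, y) \<in> set (zip q (tl q)). agent_move sel c t b R H x y"
        using less.IH[of w] by auto
      have "u \<notin> set q"
      proof
        assume "u \<in> set q"
        moreover have "\<forall>(x, y) \<in> set (zip q (tl q)). (x, y) \<in> H"
          using q_moves by (auto simp: agent_move_def)
        ultimately have "(w, u) \<in> H\<^sup>*" using walk_reaches_all[of q H u] q(2) by simp
        with \<open>(u, w) \<in> H\<close> have "(u, u) \<in> H\<^sup>+" by (rule rtrancl_into_trancl2)
        with \<open>acyclic H\<close> show False by (simp add: acyclic_def)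
      qed
      moreover have "zip (u # q) (tl (u # q)) = (u, w) # zip q (tl q)"
        using q(1,2) by (cases q) auto
      ultimately show ?thesis
        using q q_moves move by (intro exI[of _ "u # q"]) auto
    qed
  qed
  then show thesis using that by blast
qed

lemma agent_val_on_walk:
  assumes "finite H" and "acyclic H" and "distinct p" and "last p = t"
    and moves: "\<forall>(x, y) \<in> set (zip p (tl p)). agent_move sel c t b R H x y"
    and "v \<in> set p"
  shows "agent_val sel c t b R (set (zip p (tl p))) v = agent_val sel c t b R H v"
proof -
  define K where "K = set (zip p (tl p))"
  have "K \<subseteq> H" using moves by (auto simp: K_def agent_move_def)
  then have "finite K" "acyclic K" using assms(2) by (auto simp: K_def intro: acyclic_subset)
  then have "wf {(v, u). (u, v) \<in> K}"
    using finite_acyclic_wf_converse by (simp add: converse_unfold)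
  then have "agent_val sel c t b R K v = agent_val sel c t b R H v"
    using \<open>v \<in> set p\<close>
  proof (induction v rule: wf_induct_rule)
    case (less v)
    show ?case
    proof (cases "v = t")
      case True
      then show ?thesis
        using agent_val_target \<open>finite K\<close> \<open>acyclic K\<close> assms(1,2) by simp
    next
      case False
      then have "v \<noteq> last p" using \<open>last p = t\<close> by simp
      then obtain y where "(v, y) \<in> K"
        using walk_successor_exists[OF less.prems] by (auto simp: K_def)
      then have y_val: "agent_val sel c t b R K y = agent_val sel c t b R H y"
        using less.IH walk_successor_in_set by (fastforce simp: K_def)
      have move: "agent_move sel c t b R H v y"
        using moves \<open>(v, y) \<in> K\<close> by (auto simp: K_def)
      have "{w. (v, w) \<in> K \<and> agent_val sel c t b R K w \<noteq> None} = {y}"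
        using \<open>(v, y) \<in> K\<close> y_val move distinct_walk_unique_successor[OF \<open>distinct p\<close>]
        by (auto simp: K_def agent_move_def)
      with move y_val show ?thesis
        using agent_val_unique_candidate[OF \<open>finite K\<close> \<open>acyclic K\<close> False]
        by (simp add: agent_move_def)
    qed
  qed
  then show ?thesis by (simp add: K_def)
qed

end

theorem claim3:
  fixes V :: "'v set" and E :: "('v \<times> 'v) set" and c :: "'v \<Rightarrow> 'v \<Rightarrow> real"
    and s t :: 'v and b R :: real and H :: "('v \<times> 'v) set"
    and sel :: "('v \<times> 'v) set \<Rightarrow> 'v \<Rightarrow> 'v set \<Rightarrow> 'v"
  assumes "is_instance V E c s t" and "b > 1" and "R \<ge> 0"
    and "valid_tiebreak sel"
    and "minimal_motivating sel E c s t b R H"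
  shows "\<exists>p. p \<noteq> [] \<and> distinct p \<and> hd p = s \<and> last p = t \<and> H = set (zip p (tl p))"
proof -
  have "H \<subseteq> E" and "finite E" and "acyclic E"
    using assms(1,5) by (auto simp: is_instance_def minimal_motivating_def intro: finite_subset)
  then have H: "finite H" "acyclic H" by (auto intro: finite_subset acyclic_subset)
  have "agent_val sel c t b R H s \<noteq> None"
    using assms(5) by (simp add: minimal_motivating_def motivated_def)
  then obtain p where p: "p \<noteq> []" "hd p = s" "last p = t" "distinct p"
    and moves: "\<forall>(x, y) \<in> set (zip p (tl p)). agent_move sel c t b R H x y"
    using agent_walk_to_target[OF assms(4) H] by blast
  have "s \<in> set p" using p(1,2) by (cases p) auto
  then have "motivated sel c s t b R (set (zip p (tl p)))"
    using agent_val_on_walk[OF assms(4) H p(4,3) moves] \<open>agent_val sel c t b R H s \<noteq> None\<close>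
    by (simp add: motivated_def)
  moreover have "set (zip p (tl p)) \<subseteq> H" using moves by (auto simp: agent_move_def)
  ultimately have "H = set (zip p (tl p))"
    using assms(5) by (auto simp: minimal_motivating_def)
  then show ?thesis using p by blast
qed

end
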